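(* Assume that $X_1,\dots,X_n$ are independently drawn from a density $f$ which is $1$-subgaussian. Suppose there exists a $k$-component Gaussian location mixture $g=\sum_{i=1}^k w_iN(\mu_i,\sigma^2)$ with a given variance $\sigma^2$ such that $\mathrm{TV}(f,g)\le\epsilon$. Then there exists an estimate $\hat f$ such that, with probability $1-\delta$, \[\mathrm{TV}(\hat f,f)\le O_k\Big(\epsilon\sqrt{\log(1/\epsilon)}+\sqrt{\log(1/\delta)/n}\Big).\]
   Context: A distribution $\pi$ is $s$-subgaussian if $\mathbb{E}_\pi[e^{tX}]\le\exp(t^2s^2/2)$ for all $t\in\mathbb{R}$. $\mathrm{TV}(f,g)=\frac12\|f-g\|_1$. $O_k(\cdot)$ hides a constant depending only on $k$. Standing assumption: $k=O(\log n/\log\log n)$. *)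

theory Defs
  imports "HOL-Probability.Probability"
begin

definition is_density :: "(real \<Rightarrow> real) \<Rightarrow> bool" where
  "is_density h \<longleftrightarrow> h \<in> borel_measurable lborel \<and> (\<forall>x. 0 \<le> h x)
     \<and> integrable lborel h \<and> (\<integral>x. h x \<partial>lborel) = 1"

definition subgaussian :: "real \<Rightarrow> (real \<Rightarrow> real) \<Rightarrow> bool" where
  "subgaussian s h \<longleftrightarrow>
     (\<forall>t::real. (\<integral>\<^sup>+x. ennreal (exp (t * x) * h x) \<partial>lborel) \<le> ennreal (exp (t\<^sup>2 * s\<^sup>2 / 2)))"

definition tv :: "(real \<Rightarrow> real) \<Rightarrow> (real \<Rightarrow> real) \<Rightarrow> real" where
  "tv f g = (1/2) * (\<integral>x. \<bar>f x - g x\<bar> \<partial>lborel)"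

definition gauss_mix :: "nat \<Rightarrow> (nat \<Rightarrow> real) \<Rightarrow> (nat \<Rightarrow> real) \<Rightarrow> real \<Rightarrow> real \<Rightarrow> real" where
  "gauss_mix k w \<mu> \<sigma> x = (\<Sum>i<k. w i * normal_density (\<mu> i) \<sigma> x)"

definition sample_law :: "nat \<Rightarrow> (real \<Rightarrow> real) \<Rightarrow> (nat \<Rightarrow> real) measure" where
  "sample_law n h = PiM {..<n} (\<lambda>_. density lborel h)"

end

theory Submission
  imports Defs
begin

text \<open>The estimate is a minimum-distance estimate: among the \<open>k\<close>-component mixtures with the
  given \<open>\<sigma>\<close> it picks one whose distribution function is, up to \<open>1 / n\<close>, closest in sup-norm
  to the empirical one. Two such mixtures differ by a Gaussian factor times an exponential sum
  with \<open>2 k\<close> terms, which by Rolle's theorem has fewer than \<open>2 k\<close> zeros unless it vanishes;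
  between consecutive zeros the difference has constant sign, so the total variation distance of
  two mixtures is at most \<open>2 k\<close> times their Kolmogorov distance. Dyadic chaining over quantile
  cells, with a Bernstein bound for each cell count, shows that with probability \<open>1 - \<delta>\<close> the
  empirical distribution function is uniformly within \<open>60 \<surd>(ln (1 / \<delta>) / n)\<close> of the true one.\<close>

section \<open>Crossings of Gaussian location mixtures\<close>

lemma Rolle_card_zeros:
  fixes f f' :: "real \<Rightarrow> real"
  assumes deriv: "\<And>x. (f has_real_derivative f' x) (at x)"
  shows "card Z = Suc n \<Longrightarrow> \<forall>z\<in>Z. f z = 0 \<Longrightarrow>
    \<exists>Z'. finite Z' \<and> card Z' = n \<and> Z' \<subseteq> {..<Max Z} \<and> (\<forall>z\<in>Z'. f' z = 0)"
proof (induction n arbitrary: Z)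
  case 0
  then show ?case by (intro exI[of _ "{}"]) auto
next
  case (Suc n)
  have fin: "finite Z" using Suc.prems(1) by (intro card_ge_0_finite) simp
  have ne: "Z \<noteq> {}" using Suc.prems(1) by auto
  define Z0 where "Z0 = Z - {Max Z}"
  have card_Z0: "card Z0 = Suc n" using Suc.prems(1) fin ne by (simp add: Z0_def)
  moreover have "\<forall>z\<in>Z0. f z = 0" using Suc.prems(2) by (simp add: Z0_def)
  ultimately obtain Z' where Z': "finite Z'" "card Z' = n" "Z' \<subseteq> {..<Max Z0}" "\<forall>z\<in>Z'. f' z = 0"
    using Suc.IH by blast
  have "Max Z0 \<in> Z0" using card_Z0 by (intro Max_in) (auto intro: card_ge_0_finite)
  then have lt: "Max Z0 < Max Z" and eq: "f (Max Z0) = f (Max Z)"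
    using fin Suc.prems(2) by (auto simp: Z0_def order.not_eq_order_implies_strict)
  have "continuous_on {Max Z0..Max Z} f"
    using deriv by (meson DERIV_isCont continuous_at_imp_continuous_on)
  then obtain z where z: "Max Z0 < z" "z < Max Z" "(f has_real_derivative 0) (at z)"
    using Rolle[OF lt eq] deriv by (meson real_differentiable_def)
  have "f' z = 0" using z(3) deriv DERIV_unique by blast
  moreover have "z \<notin> Z'" using Z'(3) z(1) by auto
  ultimately show ?case
    using Z' z by (intro exI[of _ "insert z Z'"]) auto
qed

lemma exp_sum_eq_0_if_many_zeros:
  fixes c b :: "'i \<Rightarrow> real"
  assumes "finite I"
  shows "card I \<le> card Z \<Longrightarrow> \<forall>z\<in>Z. (\<Sum>i\<in>I. c i * exp (b i * z)) = 0 \<Longrightarrow>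
    (\<Sum>i\<in>I. c i * exp (b i * x)) = 0"
  using assms
proof (induction I arbitrary: c b Z x rule: finite_induct)
  case empty
  then show ?case by simp
next
  case (insert a I)
  \<comment> \<open>Divide by the exponential of index a and differentiate: one term disappears, and by
      Rolle at most one zero is lost.\<close>
  define \<psi> where "\<psi> x = c a + (\<Sum>i\<in>I. c i * exp ((b i - b a) * x))" for x
  define \<psi>' where "\<psi>' x = (\<Sum>i\<in>I. (c i * (b i - b a)) * exp ((b i - b a) * x))" for x
  have factor: "(\<Sum>i\<in>insert a I. c i * exp (b i * x)) = exp (b a * x) * \<psi> x" for x
    using insert.hyps unfolding \<psi>_def
    by (simp add: algebra_simps sum_distrib_left exp_diff)
  have deriv: "(\<psi> has_real_derivative \<psi>' x) (at x)" for x
    unfolding \<psi>_def \<psi>'_def by (auto intro!: derivative_eq_intros simp: algebra_simps)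
  obtain Z1 where Z1: "Z1 \<subseteq> Z" "card Z1 = Suc (card I)"
    using insert.prems(1) insert.hyps by (metis card_insert_disjoint obtain_subset_with_card_n)
  have zeros: "\<forall>z\<in>Z1. \<psi> z = 0" using insert.prems(2) Z1(1) factor by auto
  obtain Z' where "card Z' = card I" "\<forall>z\<in>Z'. \<psi>' z = 0"
    using Rolle_card_zeros[OF deriv Z1(2) zeros] by blast
  then have "\<psi>' y = 0" for y
    using insert.IH[of Z' "\<lambda>i. c i * (b i - b a)" "\<lambda>i. b i - b a" y] unfolding \<psi>'_def by auto
  then have const: "\<psi> x = \<psi> y" for y
    using deriv DERIV_isconst_all by metis
  obtain z where "z \<in> Z1" using Z1(2) by fastforce
  then have "\<psi> x = 0" using zeros const by metis
  then show ?case using factor by simp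
qed

lemma gauss_mix_eq_exp_sum:
  assumes "\<sigma> > 0"
  shows "gauss_mix k w \<mu> \<sigma> x = exp (- x\<^sup>2 / (2 * \<sigma>\<^sup>2)) *
    (\<Sum>i<k. w i * (exp (- (\<mu> i)\<^sup>2 / (2 * \<sigma>\<^sup>2)) / sqrt (2 * pi * \<sigma>\<^sup>2)) * exp (\<mu> i / \<sigma>\<^sup>2 * x))"
proof -
  have "normal_density m \<sigma> x = exp (- x\<^sup>2 / (2 * \<sigma>\<^sup>2)) *
      (exp (- m\<^sup>2 / (2 * \<sigma>\<^sup>2)) / sqrt (2 * pi * \<sigma>\<^sup>2) * exp (m / \<sigma>\<^sup>2 * x))" for m
  proof -
    have "- (x - m)\<^sup>2 / (2 * \<sigma>\<^sup>2) = - x\<^sup>2 / (2 * \<sigma>\<^sup>2) + - m\<^sup>2 / (2 * \<sigma>\<^sup>2) + m / \<sigma>\<^sup>2 * x"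
      using assms by (simp add: field_simps power2_eq_square)
    then have "exp (- (x - m)\<^sup>2 / (2 * \<sigma>\<^sup>2)) =
        exp (- x\<^sup>2 / (2 * \<sigma>\<^sup>2)) * exp (- m\<^sup>2 / (2 * \<sigma>\<^sup>2)) * exp (m / \<sigma>\<^sup>2 * x)"
      by (simp only: exp_add)
    then show ?thesis unfolding normal_density_def by simp
  qed
  then show ?thesis unfolding gauss_mix_def by (simp add: sum_distrib_left mult_ac)
qed

lemma gauss_mix_eq_or_few_crossings:
  fixes k :: nat and w \<mu> w' \<mu>' :: "nat \<Rightarrow> real"
  assumes \<sigma>: "\<sigma> > 0"
  defines "S \<equiv> {x. gauss_mix k w \<mu> \<sigma> x = gauss_mix k w' \<mu>' \<sigma> x}"
  shows "gauss_mix k w \<mu> \<sigma> = gauss_mix k w' \<mu>' \<sigma> \<or> (finite S \<and> card S < 2 * k)"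
proof -
  define a where "a m = exp (- m\<^sup>2 / (2 * \<sigma>\<^sup>2)) / sqrt (2 * pi * \<sigma>\<^sup>2)" for m
  define c where "c = case_sum (\<lambda>i. w i * a (\<mu> i)) (\<lambda>i. - (w' i * a (\<mu>' i)))"
  define b where "b = case_sum (\<lambda>i. \<mu> i / \<sigma>\<^sup>2) (\<lambda>i. \<mu>' i / \<sigma>\<^sup>2)"
  define I where "I = {..<k} <+> {..<k}"
  have diff: "gauss_mix k w \<mu> \<sigma> x - gauss_mix k w' \<mu>' \<sigma> x =
      exp (- x\<^sup>2 / (2 * \<sigma>\<^sup>2)) * (\<Sum>i\<in>I. c i * exp (b i * x))" for x
    unfolding gauss_mix_eq_exp_sum[OF \<sigma>] I_def sum.Plus[OF finite_lessThan finite_lessThan]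
    by (simp add: c_def b_def a_def algebra_simps sum_negf)
  then have S_eq: "S = {x. (\<Sum>i\<in>I. c i * exp (b i * x)) = 0}"
    unfolding S_def by (auto simp: eq_iff_diff_eq_0[of "gauss_mix k w \<mu> \<sigma> _"])
  have card_I: "card I = 2 * k" by (simp add: I_def card_Plus)
  show ?thesis
  proof (cases "\<exists>Z\<subseteq>S. card Z = 2 * k")
    case True
    then obtain Z where "Z \<subseteq> S" "card Z = card I" using card_I by auto
    then have "(\<Sum>i\<in>I. c i * exp (b i * x)) = 0" for x
      using exp_sum_eq_0_if_many_zeros[of I Z c b x] unfolding S_eq I_def by auto
    then show ?thesis using diff by (simp add: fun_eq_iff)
  next
    case False
    then have "finite S" using infinite_arbitrarily_large by blast
    moreover have "card S < 2 * k" using False obtain_subset_with_card_n not_less by metis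
    ultimately show ?thesis by blast
  qed
qed

section \<open>Total variation and distribution functions\<close>

lemma sign_const_if_no_inner_zeros:
  fixes h :: "real \<Rightarrow> real"
  assumes cont: "\<And>x. isCont h x"
    and no_zero: "\<And>x y z. x \<in> S \<Longrightarrow> y \<in> S \<Longrightarrow> x < z \<Longrightarrow> z < y \<Longrightarrow> z \<in> S \<and> h z \<noteq> 0"
  shows "(\<forall>x\<in>S. 0 \<le> h x) \<or> (\<forall>x\<in>S. h x \<le> 0)"
proof (rule ccontr)
  assume "\<not> ?thesis"
  then obtain x y where xy: "x \<in> S" "y \<in> S" "h x < 0" "0 < h y" by force
  obtain z where z: "min x y \<le> z" "z \<le> max x y" "h z = 0"
  proof (cases "x \<le> y")
    case True
    then show ?thesis using IVT[of h x 0 y] xy cont that by force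
  next
    case False
    then show ?thesis using IVT2[of h x 0 y] xy cont that by force
  qed
  moreover have "z \<noteq> x" "z \<noteq> y" using xy z(3) by auto
  ultimately have "min x y < z" "z < max x y" by (auto simp: min_def max_def split: if_splits)
  moreover have "min x y \<in> S" "max x y \<in> S" using xy by (auto simp: min_def max_def)
  ultimately show False using no_zero z(3) by blast
qed

lemma set_integrable_of_integrable:
  fixes f :: "'a \<Rightarrow> real"
  assumes "integrable M f" "S \<in> sets M"
  shows "set_integrable M S f"
  unfolding set_integrable_def using integrable_mult_indicator[OF assms(2,1)] by simp

lemma set_integral_Un_of_integrable:
  fixes f :: "'a \<Rightarrow> real"
  assumes "integrable M f" "A \<in> sets M" "B \<in> sets M" "A \<inter> B = {}"
  shows "(LINT x:A \<union> B|M. f x) = (LINT x:A|M. f x) + (LINT x:B|M. f x)"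
  using assms by (intro set_integral_Un set_integrable_of_integrable)

lemma set_integral_abs_eq_abs_set_integral:
  fixes h :: "'a \<Rightarrow> real"
  assumes S: "S \<in> sets M" and h: "integrable M h"
    and sign: "(\<forall>x\<in>S. 0 \<le> h x) \<or> (\<forall>x\<in>S. h x \<le> 0)"
  shows "(LINT x:S|M. \<bar>h x\<bar>) = \<bar>LINT x:S|M. h x\<bar>"
  using sign
proof
  assume nonneg: "\<forall>x\<in>S. 0 \<le> h x"
  then have "(LINT x:S|M. \<bar>h x\<bar>) = (LINT x:S|M. h x)"
    using S by (intro set_lebesgue_integral_cong) auto
  moreover have "0 \<le> (LINT x:S|M. h x)"
    unfolding set_lebesgue_integral_def using nonneg
    by (intro Bochner_Integration.integral_nonneg) (auto split: split_indicator)
  ultimately show ?thesis by simp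
next
  assume nonpos: "\<forall>x\<in>S. h x \<le> 0"
  then have "(LINT x:S|M. \<bar>h x\<bar>) = (LINT x:S|M. - h x)"
    using S by (intro set_lebesgue_integral_cong) auto
  moreover have "0 \<le> (LINT x:S|M. - h x)"
    unfolding set_lebesgue_integral_def using nonpos
    by (intro Bochner_Integration.integral_nonneg) (auto split: split_indicator)
  moreover have "(LINT x:S|M. - h x) = - (LINT x:S|M. h x)" by (simp add: set_lebesgue_integral_def)
  ultimately show ?thesis by simp
qed

lemma set_integral_abs_eq_if_no_inner_zeros:
  fixes h :: "real \<Rightarrow> real"
  assumes "\<And>x. isCont h x" "integrable lborel h" "P \<in> sets lborel"
    and "\<And>x y z. x \<in> P \<Longrightarrow> y \<in> P \<Longrightarrow> x < z \<Longrightarrow> z < y \<Longrightarrow> z \<in> P \<and> h z \<noteq> 0"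
  shows "(LINT x:P|lborel. \<bar>h x\<bar>) = \<bar>LINT x:P|lborel. h x\<bar>"
  using assms by (intro set_integral_abs_eq_abs_set_integral sign_const_if_no_inner_zeros)

lemma set_integral_greaterThan_eq:
  fixes h :: "real \<Rightarrow> real"
  assumes "integrable lborel h"
  shows "(LINT x:{a<..}|lborel. h x) = (\<integral>x. h x \<partial>lborel) - (LINT x:{..a}|lborel. h x)"
proof -
  have "{..a} \<union> {a<..} = UNIV" by auto
  then have "(\<integral>x. h x \<partial>lborel) = (LINT x:{..a} \<union> {a<..}|lborel. h x)"
    by (simp add: set_lebesgue_integral_def)
  also have "\<dots> = (LINT x:{..a}|lborel. h x) + (LINT x:{a<..}|lborel. h x)"
    by (rule set_integral_Un_of_integrable[OF assms]) auto
  finally show ?thesis by simp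
qed

lemma set_integral_greaterThanAtMost_eq:
  fixes h :: "real \<Rightarrow> real"
  assumes "integrable lborel h" "a \<le> b"
  shows "(LINT x:{a<..b}|lborel. h x) = (LINT x:{..b}|lborel. h x) - (LINT x:{..a}|lborel. h x)"
proof -
  have "{..a} \<union> {a<..b} = {..b}" using assms(2) by auto
  then have "(LINT x:{..b}|lborel. h x) = (LINT x:{..a} \<union> {a<..b}|lborel. h x)" by simp
  also have "\<dots> = (LINT x:{..a}|lborel. h x) + (LINT x:{a<..b}|lborel. h x)"
    by (rule set_integral_Un_of_integrable[OF assms(1)]) auto
  finally show ?thesis by simp
qed

text \<open>The zeros of \<open>h\<close> cut the line into pieces on which \<open>h\<close> has constant sign, so on each
  piece the integral of \<open>\<bar>h\<bar>\<close> is an increment of \<open>t \<mapsto> \<integral>{..t} h\<close>, hence at most \<open>2 M\<close>.\<close>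

lemma set_integral_abs_greaterThan_le_by_zeros:
  fixes h :: "real \<Rightarrow> real" and M :: real
  assumes cont: "\<And>x. isCont h x" and h: "integrable lborel h"
    and total: "(\<integral>x. h x \<partial>lborel) = 0" and fin: "finite {x. h x = 0}"
    and partial: "\<And>t. \<bar>LINT x:{..t}|lborel. h x\<bar> \<le> M"
  shows "card ({x. h x = 0} \<inter> {a<..}) = n \<Longrightarrow> (LINT x:{a<..}|lborel. \<bar>h x\<bar>) \<le> (2 * real n + 1) * M"
proof (induction n arbitrary: a)
  case 0
  then have "h y \<noteq> 0" if "a < y" for y using that fin by auto
  then have "(LINT x:{a<..}|lborel. \<bar>h x\<bar>) = \<bar>LINT x:{a<..}|lborel. h x\<bar>"
    by (intro set_integral_abs_eq_if_no_inner_zeros[OF cont h]) auto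
  also have "\<dots> \<le> M" using partial[of a] by (simp add: set_integral_greaterThan_eq[OF h] total)
  finally show ?case by simp
next
  case (Suc n)
  define Z where "Z = {x. h x = 0} \<inter> {a<..}"
  define z where "z = Min Z"
  have "finite Z" using fin by (simp add: Z_def)
  moreover have "Z \<noteq> {}" using Suc.prems by (auto simp: Z_def)
  ultimately have "z \<in> Z" and z_min: "\<And>y. y \<in> Z \<Longrightarrow> z \<le> y" by (simp_all add: z_def)
  then have az: "a < z" and "h z = 0" by (auto simp: Z_def)
  have "Z = insert z ({x. h x = 0} \<inter> {z<..})" using \<open>z \<in> Z\<close> z_min az by (force simp: Z_def)
  then have "card ({x. h x = 0} \<inter> {z<..}) = n"
    using Suc.prems \<open>finite Z\<close> by (simp add: Z_def card_insert_if)
  then have upper: "(LINT x:{z<..}|lborel. \<bar>h x\<bar>) \<le> (2 * real n + 1) * M" by (rule Suc.IH)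
  have "h y \<noteq> 0" if "a < y" "y < z" for y using that z_min by (force simp: Z_def)
  then have "(LINT x:{a<..z}|lborel. \<bar>h x\<bar>) = \<bar>LINT x:{a<..z}|lborel. h x\<bar>"
    by (intro set_integral_abs_eq_if_no_inner_zeros[OF cont h]) auto
  also have "\<dots> \<le> 2 * M"
    using partial[of z] partial[of a] set_integral_greaterThanAtMost_eq[OF h, of a z] az by linarith
  finally have lower: "(LINT x:{a<..z}|lborel. \<bar>h x\<bar>) \<le> 2 * M" .
  have "{a<..} = {a<..z} \<union> {z<..}" using az by auto
  then have "(LINT x:{a<..}|lborel. \<bar>h x\<bar>) =
      (LINT x:{a<..z}|lborel. \<bar>h x\<bar>) + (LINT x:{z<..}|lborel. \<bar>h x\<bar>)"
    using h by (simp add: set_integral_Un_of_integrable ivl_disj_int)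
  with lower upper show ?case by (simp add: algebra_simps)
qed

lemma integral_abs_le_by_zeros:
  fixes h :: "real \<Rightarrow> real" and M :: real
  assumes cont: "\<And>x. isCont h x" and h: "integrable lborel h"
    and total: "(\<integral>x. h x \<partial>lborel) = 0" and fin: "finite {x. h x = 0}"
    and partial: "\<And>t. \<bar>LINT x:{..t}|lborel. h x\<bar> \<le> M"
  shows "(\<integral>x. \<bar>h x\<bar> \<partial>lborel) \<le> (2 * real (card {x. h x = 0}) + 2) * M"
proof -
  obtain a where a: "\<forall>z\<in>{x. h x = 0}. a < z"
  proof
    have "Min (insert 0 {x. h x = 0}) \<le> z" if "h z = 0" for z using fin that by (intro Min_le) auto
    then show "\<forall>z\<in>{x. h x = 0}. Min (insert 0 {x. h x = 0}) - 1 < z" by force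
  qed
  then have "h y \<noteq> 0" if "y < a" for y using that by force
  then have "(LINT x:{..a}|lborel. \<bar>h x\<bar>) = \<bar>LINT x:{..a}|lborel. h x\<bar>"
    by (intro set_integral_abs_eq_if_no_inner_zeros[OF cont h]) auto
  with partial have lower: "(LINT x:{..a}|lborel. \<bar>h x\<bar>) \<le> M" by simp
  have "{x. h x = 0} \<inter> {a<..} = {x. h x = 0}" using a by auto
  then have upper: "(LINT x:{a<..}|lborel. \<bar>h x\<bar>) \<le> (2 * real (card {x. h x = 0}) + 1) * M"
    using set_integral_abs_greaterThan_le_by_zeros[OF assms, of a "card {x. h x = 0}"] by simp
  have "(\<integral>x. \<bar>h x\<bar> \<partial>lborel) = (LINT x:{..a}|lborel. \<bar>h x\<bar>) + (LINT x:{a<..}|lborel. \<bar>h x\<bar>)"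
    using set_integral_greaterThan_eq[of "\<lambda>x. \<bar>h x\<bar>" a] h by simp
  with lower upper show ?thesis by (simp add: algebra_simps)
qed

lemma prob_space_density:
  assumes "is_density f"
  shows "prob_space (density lborel f)"
proof
  have "emeasure (density lborel f) UNIV = ennreal (\<integral>x. f x \<partial>lborel)"
    using assms unfolding is_density_def
    by (simp add: emeasure_density nn_integral_eq_integral)
  then show "emeasure (density lborel f) (space (density lborel f)) = 1"
    using assms by (simp add: is_density_def)
qed

lemma real_distribution_density:
  assumes "is_density f"
  shows "real_distribution (density lborel f)"
proof -
  interpret prob_space "density lborel f" using prob_space_density[OF assms] .
  show ?thesis by unfold_locales simp
qed

lemma measure_density_eq_set_integral:
  assumes f: "is_density f" and S: "S \<in> sets borel"
  shows "measure (density lborel f) S = (LINT x:S|lborel. f x)"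
proof -
  have f_meas: "f \<in> borel_measurable lborel" and f_nonneg: "\<And>x. 0 \<le> f x"
    and f_int: "integrable lborel f"
    using f by (auto simp: is_density_def)
  have "emeasure (density lborel f) S = (\<integral>\<^sup>+x. ennreal (indicator S x * f x) \<partial>lborel)"
    using f_meas S by (simp add: emeasure_density nn_integral_set_ennreal mult.commute)
  also have "\<dots> = ennreal (LINT x:S|lborel. f x)"
    unfolding set_lebesgue_integral_def using f_nonneg integrable_mult_indicator[OF _ f_int] S
    by (subst nn_integral_eq_integral) auto
  finally show ?thesis
    unfolding measure_def using f_nonneg S
    by (simp add: set_lebesgue_integral_def integral_nonneg)
qed

lemma cdf_density:
  assumes "is_density f"
  shows "cdf (density lborel f) t = (LINT x:{..t}|lborel. f x)"
  unfolding cdf_def using measure_density_eq_set_integral[OF assms] by simp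

lemma measure_density_singleton:
  assumes "is_density f"
  shows "measure (density lborel f) {x} = 0"
proof -
  have "emeasure (density lborel f) {x} = (\<integral>\<^sup>+y. ennreal (f y) * indicator {x} y \<partial>lborel)"
    using assms by (simp add: is_density_def emeasure_density)
  also have "\<dots> = 0" by simp
  finally show ?thesis by (simp add: measure_def)
qed

lemma tv_commute: "tv f g = tv g f"
  unfolding tv_def by (simp add: abs_minus_commute)

lemma tv_triangle:
  assumes "integrable lborel f" "integrable lborel g" "integrable lborel h"
  shows "tv f h \<le> tv f g + tv g h"
proof -
  have "(\<integral>x. \<bar>f x - h x\<bar> \<partial>lborel) \<le> (\<integral>x. \<bar>f x - g x\<bar> + \<bar>g x - h x\<bar> \<partial>lborel)"
    using assms by (intro integral_mono) auto
  also have "\<dots> = (\<integral>x. \<bar>f x - g x\<bar> \<partial>lborel) + (\<integral>x. \<bar>g x - h x\<bar> \<partial>lborel)"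
    using assms by (intro Bochner_Integration.integral_add) auto
  finally show ?thesis unfolding tv_def by simp
qed

lemma cdf_diff_density:
  assumes f: "is_density f" and g: "is_density g"
  shows "cdf (density lborel f) t - cdf (density lborel g) t = (LINT x:{..t}|lborel. f x - g x)"
  using f g unfolding cdf_density[OF f] cdf_density[OF g]
  by (intro set_integral_diff(2)[symmetric] set_integrable_of_integrable)
    (auto simp: is_density_def)

lemma cdf_diff_le_tv:
  assumes f: "is_density f" and g: "is_density g"
  shows "\<bar>cdf (density lborel f) t - cdf (density lborel g) t\<bar> \<le> 2 * tv f g"
proof -
  have int: "integrable lborel (\<lambda>x. f x - g x)" using f g by (auto simp: is_density_def)
  have "\<bar>LINT x:{..t}|lborel. f x - g x\<bar> \<le> (\<integral>x. \<bar>indicator {..t} x * (f x - g x)\<bar> \<partial>lborel)"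
    unfolding set_lebesgue_integral_def by simp
  also have "\<dots> \<le> (\<integral>x. \<bar>f x - g x\<bar> \<partial>lborel)"
    using int integrable_mult_indicator[OF _ int, of "{..t}"]
    by (intro integral_mono) (auto split: split_indicator)
  finally show ?thesis unfolding cdf_diff_density[OF f g] tv_def by simp
qed

definition gauss_mix_class :: "nat \<Rightarrow> real \<Rightarrow> (real \<Rightarrow> real) set" where
  "gauss_mix_class k \<sigma> =
    {gauss_mix k w \<mu> \<sigma> | w \<mu>. (\<forall>i<k. 0 \<le> w i) \<and> (\<Sum>i<k. w i) = 1}"

lemma gauss_mix_in_class:
  "\<forall>i<k. 0 \<le> w i \<Longrightarrow> (\<Sum>i<k. w i) = 1 \<Longrightarrow> gauss_mix k w \<mu> \<sigma> \<in> gauss_mix_class k \<sigma>"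
  unfolding gauss_mix_class_def by blast

lemma is_density_gauss_mix:
  assumes "\<sigma> > 0" "g \<in> gauss_mix_class k \<sigma>"
  shows "is_density g"
proof -
  obtain w \<mu> where w: "\<forall>i<k. 0 \<le> w i" "(\<Sum>i<k. w i) = 1" and g: "g = gauss_mix k w \<mu> \<sigma>"
    using assms(2) by (auto simp: gauss_mix_class_def)
  have "g = (\<lambda>x. \<Sum>i<k. w i * normal_density (\<mu> i) \<sigma> x)"
    unfolding g by (simp add: gauss_mix_def fun_eq_iff)
  moreover have "(\<integral>x. (\<Sum>i<k. w i * normal_density (\<mu> i) \<sigma> x) \<partial>lborel) = 1"
    using assms(1) w by (subst Bochner_Integration.integral_sum) auto
  ultimately show ?thesis
    unfolding is_density_def using assms(1) w by (auto intro!: sum_nonneg)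
qed

lemma isCont_gauss_mix:
  assumes "\<sigma> > 0"
  shows "isCont (gauss_mix k w \<mu> \<sigma>) x"
proof -
  have "gauss_mix k w \<mu> \<sigma> =
      (\<lambda>x. \<Sum>i<k. w i * (1 / sqrt (2 * pi * \<sigma>\<^sup>2) * exp (- (x - \<mu> i)\<^sup>2 / (2 * \<sigma>\<^sup>2))))"
    by (simp add: gauss_mix_def normal_density_def fun_eq_iff)
  then show ?thesis using assms by (simp only:) (intro continuous_intros; simp)
qed

lemma tv_gauss_mix_le_cdf_dist:
  assumes \<sigma>: "\<sigma> > 0" and g1: "g1 \<in> gauss_mix_class k \<sigma>" and g2: "g2 \<in> gauss_mix_class k \<sigma>"
    and M: "\<And>t. \<bar>cdf (density lborel g1) t - cdf (density lborel g2) t\<bar> \<le> M"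
  shows "tv g1 g2 \<le> 2 * real k * M"
proof -
  obtain w1 \<mu>1 w2 \<mu>2 where gs: "g1 = gauss_mix k w1 \<mu>1 \<sigma>" "g2 = gauss_mix k w2 \<mu>2 \<sigma>"
    using g1 g2 by (auto simp: gauss_mix_class_def)
  have d1: "is_density g1" and d2: "is_density g2"
    using is_density_gauss_mix[OF \<sigma>] g1 g2 by auto
  have "0 \<le> M" using M[of 0] by linarith
  define h where "h = (\<lambda>x. g1 x - g2 x)"
  have zeros: "{x. h x = 0} = {x. g1 x = g2 x}" by (auto simp: h_def)
  from gauss_mix_eq_or_few_crossings[OF \<sigma>, of k w1 \<mu>1 w2 \<mu>2]
  show ?thesis
  proof
    assume "gauss_mix k w1 \<mu>1 \<sigma> = gauss_mix k w2 \<mu>2 \<sigma>"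
    then show ?thesis using \<open>0 \<le> M\<close> gs by (simp add: tv_def)
  next
    assume few: "finite {x. gauss_mix k w1 \<mu>1 \<sigma> x = gauss_mix k w2 \<mu>2 \<sigma> x} \<and>
      card {x. gauss_mix k w1 \<mu>1 \<sigma> x = gauss_mix k w2 \<mu>2 \<sigma> x} < 2 * k"
    have "(\<integral>x. \<bar>h x\<bar> \<partial>lborel) \<le> (2 * real (card {x. h x = 0}) + 2) * M"
    proof (rule integral_abs_le_by_zeros)
      show "isCont h x" for x unfolding h_def gs using isCont_gauss_mix[OF \<sigma>] by simp
      show "integrable lborel h" "(\<integral>x. h x \<partial>lborel) = 0"
        using d1 d2 by (auto simp: h_def is_density_def)
      show "finite {x. h x = 0}" using few zeros gs by simp
      show "\<bar>LINT x:{..t}|lborel. h x\<bar> \<le> M" for t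
        using M[of t] unfolding cdf_diff_density[OF d1 d2] h_def .
    qed
    also have "\<dots> \<le> 4 * real k * M"
      using few zeros gs \<open>0 \<le> M\<close> by (intro mult_right_mono) auto
    finally show ?thesis unfolding tv_def h_def by simp
  qed
qed

section \<open>A Bernstein bound for sample counts\<close>

definition sample_count :: "nat \<Rightarrow> 'a set \<Rightarrow> (nat \<Rightarrow> 'a) \<Rightarrow> real" where
  "sample_count n S X = (\<Sum>i<n. indicator S (X i))"

lemma sample_count_nonneg: "0 \<le> sample_count n S X"
  unfolding sample_count_def by (intro sum_nonneg) auto

lemma sample_count_le: "sample_count n S X \<le> n"
  unfolding sample_count_def using sum_mono[of "{..<n}" "\<lambda>i. indicator S (X i)" "\<lambda>_. 1::real"]
  by simp

lemma sample_count_UNIV: "sample_count n UNIV X = n"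
  unfolding sample_count_def by simp

lemma sample_count_Diff:
  "A \<subseteq> B \<Longrightarrow> sample_count n B X = sample_count n A X + sample_count n (B - A) X"
  unfolding sample_count_def
  by (subst sum.distrib[symmetric]) (intro sum.cong, auto split: split_indicator)

lemma sample_count_mono: "A \<subseteq> B \<Longrightarrow> sample_count n A X \<le> sample_count n B X"
  using sample_count_Diff[of A B n X] sample_count_nonneg[of n "B - A" X] by simp

lemma measurable_sample_count:
  assumes "S \<in> sets P"
  shows "sample_count n S \<in> borel_measurable (PiM {..<n} (\<lambda>_. P))"
  using assms unfolding sample_count_def by measurable

lemma integral_exp_sample_count:
  assumes "prob_space P" "S \<in> sets P"
  shows "(\<integral>X. exp (l * sample_count n S X) \<partial>PiM {..<n} (\<lambda>_. P)) =
    (1 + (exp l - 1) * measure P S) ^ n"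
proof -
  interpret P: prob_space P by fact
  interpret PS: product_prob_space "\<lambda>_. P" "{..<n}" by unfold_locales
  have one: "(\<integral>x. exp (l * indicator S x) \<partial>P) = 1 + (exp l - 1) * measure P S"
  proof -
    have "(\<integral>x. exp (l * indicator S x) \<partial>P) = (\<integral>x. 1 + (exp l - 1) * indicator S x \<partial>P)"
      by (intro Bochner_Integration.integral_cong) (auto split: split_indicator)
    also have "\<dots> = 1 + (exp l - 1) * measure P S"
      using assms(2) P.emeasure_space_1 P.integrable_const_bound[of "indicator S :: _ \<Rightarrow> real" 1]
      by (subst Bochner_Integration.integral_add) (auto simp: P.prob_space)
    finally show ?thesis .
  qed
  have "(\<integral>X. exp (l * sample_count n S X) \<partial>PiM {..<n} (\<lambda>_. P)) =
      (\<integral>X. (\<Prod>i<n. exp (l * indicator S (X i))) \<partial>PiM {..<n} (\<lambda>_. P))"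
    unfolding sample_count_def sum_distrib_left exp_sum[OF finite_lessThan] ..
  also have "\<dots> = (\<Prod>i<n. (\<integral>x. exp (l * indicator S x) \<partial>P))"
    using assms(2)
      by (intro PS.product_integral_prod)
        (auto intro!: P.integrable_const_bound[where B = "exp \<bar>l\<bar>"] split: split_indicator)
  finally show ?thesis using one by simp
qed

lemma exp_le_one_plus_sq:
  fixes x :: real
  assumes "\<bar>x\<bar> \<le> 1"
  shows "exp x \<le> 1 + x + x\<^sup>2"
proof (cases "0 \<le> x")
  case True
  then show ?thesis using exp_bound assms by simp
next
  case False
  have "exp x = 1 / exp (- x)" by (simp add: exp_minus field_simps)
  also have "\<dots> \<le> 1 / (1 - x)"
    using False exp_ge_add_one_self[of "- x"] by (intro divide_left_mono) auto
  also have "\<dots> \<le> 1 + x + x\<^sup>2"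
    using False assms mult_nonpos_nonneg[of x "x * x"]
    by (simp add: field_simps power2_eq_square)
  finally show ?thesis .
qed

lemma integrable_exp_sample_count:
  assumes "prob_space P" "S \<in> sets P"
  shows "integrable (PiM {..<n} (\<lambda>_. P)) (\<lambda>X. exp (l * sample_count n S X))"
proof -
  interpret prob_space "PiM {..<n} (\<lambda>_. P)" by (intro prob_space_PiM) (simp add: assms(1))
  have "l * sample_count n S X \<le> \<bar>l\<bar> * n" for X
  proof -
    have "l * sample_count n S X \<le> \<bar>l\<bar> * sample_count n S X"
      using sample_count_nonneg by (intro mult_right_mono) auto
    also have "\<dots> \<le> \<bar>l\<bar> * n" using sample_count_le by (intro mult_left_mono) auto
    finally show ?thesis .
  qed
  then show ?thesis using measurable_sample_count[OF assms(2)]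
    by (intro integrable_const_bound[where B = "exp (\<bar>l\<bar> * n)"]) auto
qed

lemma integral_exp_centered_sample_count_le:
  fixes n :: nat and P :: "'a measure" and p :: real
  assumes P: "prob_space P" and S: "S \<in> sets P" and l: "\<bar>l\<bar> \<le> 1"
  defines "p \<equiv> measure P S"
  shows "(\<integral>X. exp (l * (sample_count n S X - n * p)) \<partial>PiM {..<n} (\<lambda>_. P)) \<le> exp (n * p * l\<^sup>2)"
proof -
  interpret P: prob_space P by fact
  have p: "0 \<le> p" "p \<le> 1" unfolding p_def by auto
  have "(\<integral>X. exp (l * (sample_count n S X - n * p)) \<partial>PiM {..<n} (\<lambda>_. P)) =
      exp (- l * n * p) * (\<integral>X. exp (l * sample_count n S X) \<partial>PiM {..<n} (\<lambda>_. P))"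
    by (simp add: right_diff_distrib exp_diff exp_minus field_simps)
  also have "(\<integral>X. exp (l * sample_count n S X) \<partial>PiM {..<n} (\<lambda>_. P)) = (1 + (exp l - 1) * p) ^ n"
    unfolding p_def by (rule integral_exp_sample_count[OF P S])
  also have "(1 + (exp l - 1) * p) ^ n \<le> exp ((exp l - 1) * p) ^ n"
  proof (intro power_mono exp_ge_add_one_self)
    have "0 \<le> p * exp l" using p by simp
    moreover have "(exp l - 1) * p = p * exp l - p" by (simp add: algebra_simps)
    ultimately show "0 \<le> 1 + (exp l - 1) * p" using p by linarith
  qed
  also have "\<dots> \<le> exp ((l + l\<^sup>2) * p) ^ n"
    using exp_le_one_plus_sq[OF l] p by (intro power_mono) (auto intro: mult_right_mono)
  finally show ?thesis
    by (simp add: exp_of_nat_mult[symmetric] exp_add[symmetric] mult_left_mono algebra_simps)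
qed

lemma sample_count_tail:
  fixes n :: nat and P :: "'a measure" and p :: real
  assumes P: "prob_space P" and S: "S \<in> sets P" and s: "0 < s" "s \<le> 1"
  defines "M \<equiv> PiM {..<n} (\<lambda>_. P)" and "p \<equiv> measure P S"
  shows "measure M {X \<in> space M. t \<le> \<bar>sample_count n S X - n * p\<bar>}
    \<le> 2 * exp (n * p * s\<^sup>2 - s * t)"
proof -
  interpret M: prob_space M unfolding M_def by (intro prob_space_PiM) (simp add: P)
  have [measurable]: "sample_count n S \<in> borel_measurable M"
    unfolding M_def using S by (rule measurable_sample_count)
  have one_side: "measure M {X \<in> space M. t \<le> e * (sample_count n S X - n * p)}
      \<le> exp (n * p * s\<^sup>2 - s * t)" if e: "\<bar>e\<bar> = 1" for e
  proof -
    have "e\<^sup>2 = 1" using e by (metis power2_abs one_power2)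
    then have "\<bar>s * e\<bar> \<le> 1" "(s * e)\<^sup>2 = s\<^sup>2" using e s by (auto simp: abs_mult power_mult_distrib)
    have int: "integrable M (\<lambda>X. exp (s * (e * (sample_count n S X - n * p))))"
      using integrable_exp_sample_count[OF P S, of n "s * e"] unfolding M_def
      by (simp add: algebra_simps exp_diff)
    have "measure M {X \<in> space M. t \<le> e * (sample_count n S X - n * p)}
        \<le> exp (- s * t) * (\<integral>X\<in>space M. exp (s * (e * (sample_count n S X - n * p))) \<partial>M)"
      using int by (intro M.Chernoff_ineq_ge s set_integrable_of_integrable) auto
    also have "(\<integral>X\<in>space M. exp (s * (e * (sample_count n S X - n * p))) \<partial>M) \<le> exp (n * p * s\<^sup>2)"
      using integral_exp_centered_sample_count_le[OF P S \<open>\<bar>s * e\<bar> \<le> 1\<close>, of n]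
        \<open>(s * e)\<^sup>2 = s\<^sup>2\<close> set_integral_space[OF int]
      by (simp add: M_def p_def mult.assoc)
    finally show ?thesis by (simp add: exp_add[symmetric] algebra_simps mult_left_mono)
  qed
  have "{X \<in> space M. t \<le> \<bar>sample_count n S X - n * p\<bar>} =
      {X \<in> space M. t \<le> 1 * (sample_count n S X - n * p)} \<union>
      {X \<in> space M. t \<le> - 1 * (sample_count n S X - n * p)}"
    by (auto simp: abs_if)
  then have "measure M {X \<in> space M. t \<le> \<bar>sample_count n S X - n * p\<bar>} \<le>
      measure M {X \<in> space M. t \<le> 1 * (sample_count n S X - n * p)} +
      measure M {X \<in> space M. t \<le> - 1 * (sample_count n S X - n * p)}"
    by (simp only:) (intro measure_Un_le; measurable)
  also have "\<dots> \<le> 2 * exp (n * p * s\<^sup>2 - s * t)"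
    using one_side[of 1] one_side[of "- 1"] by simp
  finally show ?thesis .
qed

lemma sample_count_deviation:
  fixes n :: nat and P :: "'a measure" and p :: real
  assumes P: "prob_space P" and S: "S \<in> sets P" and L: "0 < L"
  defines "M \<equiv> PiM {..<n} (\<lambda>_. P)" and "p \<equiv> measure P S"
  shows "measure M {X \<in> space M. 2 * sqrt (n * p * L) + 2 * L \<le> \<bar>sample_count n S X - n * p\<bar>}
    \<le> 2 * exp (- L)"
proof -
  define q where "q = n * p"
  define s where "s = (if L \<le> q then sqrt (L / q) else 1)"
  have "0 \<le> q" unfolding q_def p_def by simp
  have s: "0 < s" "s \<le> 1" using L by (auto simp: s_def)
  have "q * s\<^sup>2 - s * (2 * sqrt (q * L) + 2 * L) \<le> - L"
  proof (cases "L \<le> q")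
    case True
    then have "q * s\<^sup>2 = L" using L by (simp add: s_def)
    moreover have "s * sqrt (q * L) = L"
      using True L by (simp add: s_def real_sqrt_mult[symmetric] power2_eq_square[symmetric])
    moreover have "0 \<le> s * L" using s L by simp
    ultimately show ?thesis by (simp add: algebra_simps)
  next
    case False
    have "0 \<le> sqrt (q * L)" using \<open>0 \<le> q\<close> L by simp
    moreover have "q * s\<^sup>2 - s * (2 * sqrt (q * L) + 2 * L) = q - 2 * sqrt (q * L) - 2 * L"
      using False by (simp add: s_def)
    ultimately show ?thesis using False by linarith
  qed
  then have "exp (q * s\<^sup>2 - s * (2 * sqrt (q * L) + 2 * L)) \<le> exp (- L)" by simp
  with sample_count_tail[OF P S s, of n "2 * sqrt (q * L) + 2 * L"] show ?thesis
    unfolding M_def p_def q_def by linarith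
qed

section \<open>Uniform deviation of the empirical distribution function\<close>

definition cdf_sublevel :: "real measure \<Rightarrow> real \<Rightarrow> real set" where
  "cdf_sublevel P u = {x. cdf P x \<le> u}"

definition dyadic_cell :: "real measure \<Rightarrow> nat \<Rightarrow> nat \<Rightarrow> real set" where
  "dyadic_cell P l i = cdf_sublevel P ((i + 1) / 2 ^ l) - cdf_sublevel P (i / 2 ^ l)"

lemma dyadic_ceiling:
  fixes v :: real
  assumes "0 \<le> v" "v \<le> 1"
  obtains c :: nat where "c \<le> 2 ^ J" "v * 2 ^ J \<le> c" "c < v * 2 ^ J + 1"
proof
  have "0 \<le> v * 2 ^ J" "v * 2 ^ J \<le> of_int (2 ^ J)" using assms
    by (simp_all add: mult_left_le_one_le)
  then have "0 \<le> \<lceil>v * 2 ^ J\<rceil>" "\<lceil>v * 2 ^ J\<rceil> \<le> 2 ^ J" by (simp_all only: ceiling_le_iff) simp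
  then show "nat \<lceil>v * 2 ^ J\<rceil> \<le> 2 ^ J" by (simp add: nat_le_iff)
  show "v * 2 ^ J \<le> nat \<lceil>v * 2 ^ J\<rceil>" "nat \<lceil>v * 2 ^ J\<rceil> < v * 2 ^ J + 1"
    using \<open>0 \<le> \<lceil>v * 2 ^ J\<rceil>\<close> ceiling_correct[of "v * 2 ^ J"] by simp_all
qed

lemma dyadic_round_up:
  fixes v :: real
  assumes "0 \<le> v" "v \<le> 1"
  obtains m :: nat where "1 \<le> m" "m \<le> 2 ^ J" "v \<le> m / 2 ^ J" "m / 2 ^ J \<le> v + 1 / 2 ^ J"
proof -
  obtain c :: nat where c: "c \<le> 2 ^ J" "v * 2 ^ J \<le> c" "c < v * 2 ^ J + 1"
    using dyadic_ceiling[OF assms] .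
  have "0 \<le> v * 2 ^ J" using assms by simp
  then have "v * 2 ^ J \<le> max 1 c" "max 1 c \<le> v * 2 ^ J + 1" using c by (auto simp: max_def)
  then show ?thesis using c(1) by (intro that[of "max 1 c"]) (simp_all add: field_simps)
qed

lemma dyadic_round_down:
  fixes v :: real
  assumes "0 \<le> v" "v \<le> 1" "1 < v * 2 ^ J"
  obtains m :: nat where "1 \<le> m" "m \<le> 2 ^ J" "m / 2 ^ J < v" "v - 1 / 2 ^ J \<le> m / 2 ^ J"
proof -
  obtain c :: nat where c: "c \<le> 2 ^ J" "v * 2 ^ J \<le> c" "c < v * 2 ^ J + 1"
    using dyadic_ceiling[OF assms(1,2)] .
  have "2 \<le> c" using c(2) assms(3) by linarith
  then have "real (c - 1) = real c - 1" by simp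
  then show ?thesis using c \<open>2 \<le> c\<close> by (intro that[of "c - 1"]) (simp_all add: field_simps)
qed

lemma cdf_sublevel_mono: "u \<le> v \<Longrightarrow> cdf_sublevel P u \<subseteq> cdf_sublevel P v"
  unfolding cdf_sublevel_def by auto

context real_distribution
begin

lemma cdf_sublevel_one: "cdf_sublevel M 1 = UNIV"
  unfolding cdf_sublevel_def using cdf_bounded_prob by auto

lemma sets_cdf_sublevel: "cdf_sublevel M u \<in> sets borel"
proof -
  have "cdf M \<in> borel_measurable borel"
    by (intro borel_measurable_mono) (simp add: mono_def cdf_nondecreasing)
  then show ?thesis unfolding cdf_sublevel_def by measurable
qed

lemma sets_dyadic_cell: "dyadic_cell M l i \<in> sets borel"
  unfolding dyadic_cell_def using sets_cdf_sublevel by auto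

lemma cdf_sublevel_eq_atMost:
  assumes atomless: "\<And>x. measure M {x} = 0" and "u < 1" and "cdf_sublevel M u \<noteq> {}"
  obtains s where "cdf_sublevel M u = {..s}" "cdf M s = u"
proof -
  define F where "F = cdf M"
  define T where "T = cdf_sublevel M u"
  have cont: "isCont F x" for x unfolding F_def using isCont_cdf atomless by simp
  have mono: "x \<le> y \<Longrightarrow> F x \<le> F y" for x y unfolding F_def by (rule cdf_nondecreasing)
  have "eventually (\<lambda>x. u < F x) at_top"
    using cdf_lim_at_top_prob \<open>u < 1\<close> unfolding F_def by (rule order_tendstoD)
  then obtain x0 where x0: "u < F x0" by (metis eventually_at_top_linorder order_refl)
  have below_x0: "x \<le> x0" if "x \<in> T" for x
    using that x0 mono[of x0 x] by (force simp: T_def cdf_sublevel_def F_def)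
  have "closed T"
    unfolding T_def cdf_sublevel_def F_def[symmetric]
    using cont by (intro closed_Collect_le continuous_at_imp_continuous_on) auto
  moreover have bdd: "bdd_above T" using below_x0 by (intro bdd_aboveI)
  ultimately have "Sup T \<in> T" using assms(3) closed_contains_Sup by (auto simp: T_def)
  define s where "s = Sup T"
  have "s \<in> T" using \<open>Sup T \<in> T\<close> by (simp add: s_def)
  have "F s = u"
  proof (rule ccontr)
    assume "F s \<noteq> u"
    then have "F s < u" using \<open>s \<in> T\<close> by (simp add: T_def cdf_sublevel_def F_def)
    then obtain z where z: "s \<le> z" "z \<le> x0" "F z = u"
      using IVT[of F s u x0] x0 below_x0[OF \<open>s \<in> T\<close>] cont by auto
    then have "z \<in> T" by (simp add: T_def cdf_sublevel_def F_def)
    then have "z \<le> s" unfolding s_def using bdd by (rule cSup_upper)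
    then show False using z \<open>F s < u\<close> by simp
  qed
  have "T = {..s}"
  proof
    show "T \<subseteq> {..s}" using bdd by (auto simp: s_def intro: cSup_upper)
    show "{..s} \<subseteq> T"
    proof
      fix x assume "x \<in> {..s}"
      then have "F x \<le> F s" by (intro mono) simp
      then show "x \<in> T" using \<open>F s = u\<close> by (simp add: T_def cdf_sublevel_def F_def)
    qed
  qed
  then show ?thesis using that \<open>F s = u\<close> by (simp add: T_def F_def)
qed

lemma measure_cdf_sublevel:
  assumes atomless: "\<And>x. measure M {x} = 0" and u: "0 \<le> u" "u \<le> 1"
  shows "measure M (cdf_sublevel M u) = u"
proof (cases "u = 1")
  case True
  then show ?thesis using cdf_sublevel_one prob_space by simp
next
  case False
  show ?thesis
  proof (cases "cdf_sublevel M u = {}")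
    case True
    have "\<not> 0 < u"
    proof
      assume "0 < u"
      then have "eventually (\<lambda>x. cdf M x < u) at_bot"
        by (intro order_tendstoD(2)[OF cdf_lim_at_bot])
      then obtain y where "cdf M y < u" by (metis eventually_at_bot_linorder order_refl)
      then have "y \<in> cdf_sublevel M u" by (simp add: cdf_sublevel_def)
      with True show False by simp
    qed
    then show ?thesis using True u by simp
  next
    case False
    with \<open>u \<noteq> 1\<close> u obtain s where "cdf_sublevel M u = {..s}" "cdf M s = u"
      by (metis atomless cdf_sublevel_eq_atMost order_le_less)
    then show ?thesis by (simp add: cdf_def)
  qed
qed

lemma measure_dyadic_cell:
  assumes atomless: "\<And>x. measure M {x} = 0" and i: "i < 2 ^ l"
  shows "measure M (dyadic_cell M l i) = 1 / 2 ^ l"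
proof -
  have "real (i + 1) \<le> real (2 ^ l)" using i by (simp only: of_nat_le_iff)
  then have "real i + 1 \<le> 2 ^ l" by simp
  then have le1: "(real i + 1) / 2 ^ l \<le> 1" "real i / 2 ^ l \<le> 1"
    using i by (auto simp: field_simps)
  have "measure M (dyadic_cell M l i) =
      measure M (cdf_sublevel M ((real i + 1) / 2 ^ l)) -
      measure M (cdf_sublevel M (real i / 2 ^ l))"
    unfolding dyadic_cell_def using sets_cdf_sublevel
    by (intro finite_measure_Diff cdf_sublevel_mono divide_right_mono) auto
  also have "\<dots> = 1 / 2 ^ l"
    using le1 by (simp add: measure_cdf_sublevel[OF atomless] field_simps)
  finally show ?thesis .
qed

text \<open>The sublevel set at an odd grid point \<open>(2 k + 1) / 2\<^sup>j\<^sup>+\<^sup>1\<close> is the one at the coarser grid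
  point \<open>(k + 1) / 2\<^sup>j\<close> minus a single cell of level \<open>j + 1\<close>, so each refinement of the grid adds
  the error of one cell.\<close>

lemma sample_count_cdf_sublevel_split:
  "sample_count n (cdf_sublevel P (real (k + 1) / 2 ^ j)) X =
    sample_count n (cdf_sublevel P (real (2 * k + 1) / 2 ^ Suc j)) X +
    sample_count n (dyadic_cell P (Suc j) (2 * k + 1)) X"
proof -
  have "(real (2 * k + 1) + 1) / 2 ^ Suc j = real (k + 1) / 2 ^ j" by (simp add: field_simps)
  then have "cdf_sublevel P (real (k + 1) / 2 ^ j) - cdf_sublevel P (real (2 * k + 1) / 2 ^ Suc j) =
      dyadic_cell P (Suc j) (2 * k + 1)"
    by (simp add: dyadic_cell_def)
  moreover have
    "cdf_sublevel P (real (2 * k + 1) / 2 ^ Suc j) \<subseteq> cdf_sublevel P (real (k + 1) / 2 ^ j)"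
    by (intro cdf_sublevel_mono) (simp add: field_simps)
  ultimately show ?thesis using sample_count_Diff by metis
qed

lemma sample_count_cdf_sublevel_chain:
  fixes m :: nat and s :: "nat \<Rightarrow> real"
  assumes cells: "\<And>l i. l \<in> {1..J} \<Longrightarrow> i < 2 ^ l \<Longrightarrow>
      \<bar>sample_count n (dyadic_cell M l i) X - n / 2 ^ l\<bar> \<le> s l"
    and s_nonneg: "\<And>l. 0 \<le> s l"
  shows "j \<le> J \<Longrightarrow> 1 \<le> m \<Longrightarrow> m \<le> 2 ^ j \<Longrightarrow>
    \<bar>sample_count n (cdf_sublevel M (m / 2 ^ j)) X - real n * m / 2 ^ j\<bar> \<le> (\<Sum>l=1..j. s l)"
proof (induction j arbitrary: m)
  case 0
  then show ?case by (simp add: cdf_sublevel_one sample_count_UNIV)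
next
  case (Suc j)
  have sum_Suc: "(\<Sum>l=1..Suc j. s l) = (\<Sum>l=1..j. s l) + s (Suc j)" by simp
  show ?case
  proof (cases "even m")
    case True
    then obtain k where m: "m = 2 * k" by blast
    then have "\<bar>sample_count n (cdf_sublevel M (k / 2 ^ j)) X - real n * k / 2 ^ j\<bar>
        \<le> (\<Sum>l=1..j. s l)"
      using Suc by auto
    moreover have "real m / 2 ^ Suc j = k / 2 ^ j" "real n * m / 2 ^ Suc j = real n * k / 2 ^ j"
      using m by auto
    ultimately show ?thesis using sum_Suc s_nonneg[of "Suc j"] by simp
  next
    case False
    then obtain k where m: "m = 2 * k + 1" using oddE by blast
    then have "\<bar>sample_count n (cdf_sublevel M ((k + 1) / 2 ^ j)) X - real n * (k + 1) / 2 ^ j\<bar>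
        \<le> (\<Sum>l=1..j. s l)"
      using Suc.IH[of "k + 1"] Suc.prems by auto
    moreover have "2 * k + 1 < 2 ^ Suc j" using Suc.prems m by simp presburger
    then have "\<bar>sample_count n (dyadic_cell M (Suc j) (2 * k + 1)) X - n / 2 ^ Suc j\<bar> \<le> s (Suc j)"
      using cells[of "Suc j" "2 * k + 1"] Suc.prems by simp
    moreover note sample_count_cdf_sublevel_split[of n M k j X]
    moreover have "real n * real (2 * k + 1) / 2 ^ Suc j = real n * (k + 1) / 2 ^ j - n / 2 ^ Suc j"
      by (simp add: field_simps)
    ultimately show ?thesis unfolding m sum_Suc abs_le_iff by linarith
  qed
qed

text \<open>Sandwich the half-line \<open>{..t}\<close> between sublevel sets at consecutive grid points
  \<open>m / 2\<^sup>J\<close>.\<close>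

lemma sample_count_atMost_from_grid:
  assumes grid: "\<And>m :: nat. 1 \<le> m \<Longrightarrow> m \<le> 2 ^ J \<Longrightarrow>
      \<bar>sample_count n (cdf_sublevel M (m / 2 ^ J)) X - real n * m / 2 ^ J\<bar> \<le> D"
    and "0 \<le> D"
  shows "\<bar>sample_count n {..t} X - n * cdf M t\<bar> \<le> n / 2 ^ J + D"
proof -
  define v where "v = cdf M t"
  have v: "0 \<le> v" "v \<le> 1" unfolding v_def using cdf_nonneg cdf_bounded_prob by auto
  have upper: "sample_count n {..t} X \<le> n * v + n / 2 ^ J + D"
  proof -
    obtain m :: nat where m: "1 \<le> m" "m \<le> 2 ^ J" "v \<le> m / 2 ^ J" "m / 2 ^ J \<le> v + 1 / 2 ^ J"
      using dyadic_round_up[OF v] .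
    have "{..t} \<subseteq> cdf_sublevel M (m / 2 ^ J)"
      using m(3) cdf_nondecreasing by (force simp: cdf_sublevel_def v_def)
    then have "sample_count n {..t} X \<le> sample_count n (cdf_sublevel M (m / 2 ^ J)) X"
      by (rule sample_count_mono)
    also have "\<dots> \<le> n * (m / 2 ^ J) + D" using grid[OF m(1,2)] by simp
    also have "n * (m / 2 ^ J) \<le> n * (v + 1 / 2 ^ J)" using m(4) by (intro mult_left_mono) auto
    finally show ?thesis by (simp add: algebra_simps)
  qed
  have lower: "n * v - n / 2 ^ J - D \<le> sample_count n {..t} X"
  proof (cases "v * 2 ^ J \<le> 1")
    case True
    then have "n * v \<le> n * (1 / 2 ^ J)" by (intro mult_left_mono) (auto simp: field_simps)
    then show ?thesis using sample_count_nonneg[of n "{..t}" X] \<open>0 \<le> D\<close> by simp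
  next
    case False
    then have "1 < v * 2 ^ J" by simp
    then obtain m :: nat where m: "1 \<le> m" "m \<le> 2 ^ J" "m / 2 ^ J < v" "v - 1 / 2 ^ J \<le> m / 2 ^ J"
      using dyadic_round_down[OF v] by blast
    have "cdf_sublevel M (m / 2 ^ J) \<subseteq> {..t}"
    proof
      fix y assume "y \<in> cdf_sublevel M (m / 2 ^ J)"
      then have "cdf M y < cdf M t" using m(3) by (simp add: cdf_sublevel_def v_def)
      then show "y \<in> {..t}" using cdf_nondecreasing[of t y] by (cases "y \<le> t") auto
    qed
    then have "sample_count n (cdf_sublevel M (m / 2 ^ J)) X \<le> sample_count n {..t} X"
      by (rule sample_count_mono)
    moreover have "n * (v - 1 / 2 ^ J) \<le> n * (m / 2 ^ J)" using m(4) by (intro mult_left_mono) auto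
    ultimately show ?thesis using grid[OF m(1,2)] by (simp add: algebra_simps abs_le_iff)
  qed
  show ?thesis using upper lower by (simp add: abs_le_iff v_def algebra_simps)
qed

end

lemma linear_le_exp_growth: "1 \<le> l \<Longrightarrow> 2 * real l + 2 \<le> 4 * (81 / 50) ^ l"
proof (induction l rule: dec_induct)
  case base
  then show ?case by simp
next
  case (step l)
  then have "2 * real (Suc l) + 2 \<le> 81 / 50 * (2 * real l + 2)" by simp
  also have "\<dots> \<le> 81 / 50 * (4 * (81 / 50) ^ l)" using step.IH by simp
  finally show ?case by simp
qed

lemma sqrt_level_weight_le: "1 \<le> l \<Longrightarrow> sqrt ((2 * real l + 2) / 2 ^ l) \<le> 2 * (9 / 10) ^ l"
proof -
  assume "1 \<le> l"
  have "(2 * real l + 2) / 2 ^ l \<le> 4 * (81 / 50) ^ l / 2 ^ l"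
    using linear_le_exp_growth[OF \<open>1 \<le> l\<close>] by (intro divide_right_mono) auto
  also have "\<dots> = (2 * (9 / 10) ^ l)\<^sup>2"
    by (simp add: power2_eq_square power_mult_distrib[symmetric] field_simps)
  finally show ?thesis by (simp add: real_le_lsqrt)
qed

lemma sum_nine_tenths_pow_le: "(\<Sum>l=1..J. (9 / 10 :: real) ^ l) \<le> 9"
proof -
  have "(\<Sum>l=1..J. (9 / 10 :: real) ^ l) = 9 * (1 - (9 / 10) ^ J)"
    by (induction J) (simp_all add: field_simps)
  then show ?thesis by simp
qed

lemma sum_level_weights_le: "(\<Sum>l=1..J. 2 * real l + 2) \<le> 5 * 2 ^ J"
proof -
  have "(\<Sum>l=1..J. 2 * real l + 2) = real J * real J + 3 * real J"
    by (induction J) (simp_all add: field_simps)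
  also have "\<dots> + 4 \<le> 5 * 2 ^ J"
  proof (induction J)
    case (Suc J)
    have "real (Suc J) * real (Suc J) + 3 * real (Suc J) + 4 \<le>
        2 * (real J * real J + 3 * real J + 4)"
      by (simp add: algebra_simps)
    also have "\<dots> \<le> 5 * 2 ^ Suc J" using Suc.IH by simp
    finally show ?case .
  qed simp
  finally show ?thesis by simp
qed

text \<open>The deviation allowed for a cell of level \<open>l\<close> is the bound of \<open>sample_count_deviation\<close>
  with \<open>L = ell + (2 l + 1) ln 2\<close>: for \<open>ell = ln (1 / \<delta>)\<close> a cell of level \<open>l\<close> exceeds it with
  probability at most \<open>\<delta> / 4\<^sup>l\<close>, and the \<open>2\<^sup>l\<close> cells of all levels together with probability at
  most \<open>\<delta>\<close>.\<close>

definition cell_tolerance :: "nat \<Rightarrow> real \<Rightarrow> nat \<Rightarrow> real" where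
  "cell_tolerance n ell l =
    2 * sqrt (n / 2 ^ l * (ell + (2 * real l + 1) * ln 2)) + 2 * (ell + (2 * real l + 1) * ln 2)"

lemma sum_cell_tolerance_le:
  assumes "ln 2 \<le> ell"
  shows "(\<Sum>l=1..J. cell_tolerance n ell l) \<le> 36 * sqrt (ell * n) + 10 * ell * 2 ^ J"
proof -
  have ell: "0 \<le> ell" using assms ln_ge_zero[of 2] by linarith
  have L: "ell + (2 * real l + 1) * ln 2 \<le> (2 * real l + 2) * ell" for l :: nat
    using mult_left_mono[OF assms, of "2 * l + 1"] by (simp add: algebra_simps)
  have "cell_tolerance n ell l \<le> 4 * sqrt (ell * n) * (9 / 10) ^ l + 2 * ell * (2 * real l + 2)"
    if "1 \<le> l" for l
  proof -
    have "sqrt (n / 2 ^ l * (ell + (2 * real l + 1) * ln 2)) \<le>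
        sqrt (n / 2 ^ l * ((2 * real l + 2) * ell))"
      using L by (intro real_sqrt_le_mono mult_left_mono) auto
    also have "\<dots> = sqrt (ell * n) * sqrt ((2 * real l + 2) / 2 ^ l)"
      by (simp add: real_sqrt_mult[symmetric] field_simps)
    also have "\<dots> \<le> sqrt (ell * n) * (2 * (9 / 10) ^ l)"
      using sqrt_level_weight_le[OF that] ell by (intro mult_left_mono) auto
    finally show ?thesis using L[of l] unfolding cell_tolerance_def by (simp add: algebra_simps)
  qed
  then have "(\<Sum>l=1..J. cell_tolerance n ell l) \<le>
      (\<Sum>l=1..J. 4 * sqrt (ell * n) * (9 / 10) ^ l + 2 * ell * (2 * real l + 2))"
    by (intro sum_mono) auto
  also have "\<dots> = 4 * sqrt (ell * n) * (\<Sum>l=1..J. (9 / 10) ^ l) + 2 * ell * (\<Sum>l=1..J. 2 * real l + 2)"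
    unfolding sum_distrib_left by (rule sum.distrib)
  also have "\<dots> \<le> 4 * sqrt (ell * n) * 9 + 2 * ell * (5 * 2 ^ J)"
    using ell by (intro add_mono mult_left_mono sum_nine_tenths_pow_le sum_level_weights_le) auto
  finally show ?thesis by simp
qed

lemma sum_dyadic_levels_le:
  fixes \<delta> :: real
  assumes "0 \<le> \<delta>"
  shows "(\<Sum>l=1..J. \<Sum>i<(2::nat) ^ l. \<delta> / 4 ^ l) \<le> \<delta>"
proof -
  have "(\<Sum>l=1..J. \<Sum>i<(2::nat) ^ l. \<delta> / 4 ^ l) = (\<Sum>l=1..J. \<delta> * (1 / 2) ^ l)"
    by (intro sum.cong) (simp_all add: field_simps flip: power_mult_distrib)
  also have "\<dots> = \<delta> * (\<Sum>l=1..J. (1 / 2) ^ l)" by (simp add: sum_distrib_left)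
  also have "(\<Sum>l=1..J. (1 / 2 :: real) ^ l) = 1 - (1 / 2) ^ J"
    by (induction J) (simp_all add: field_simps)
  finally show ?thesis using assms by (simp add: mult_left_le)
qed

lemma dyadic_budget_le:
  fixes n :: nat
  assumes n: "1 \<le> n" and ell: "ln 2 \<le> ell"
    and J: "(1 / 2) ^ J \<le> sqrt (ell / n)" "sqrt (ell / n) * 2 ^ J < 2"
  shows "n / 2 ^ J + (\<Sum>l=1..J. cell_tolerance n ell l) \<le> 60 * sqrt (ell / n) * n"
proof -
  define r where "r = sqrt (ell / n)"
  have "0 < ell" using ell ln_gt_zero[of 2] by linarith
  then have r: "0 < r" "r\<^sup>2 = ell / n" using n by (auto simp: r_def)
  have "ell / n * (real n)\<^sup>2 = ell * n" using n by (simp add: power2_eq_square)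
  then have "sqrt (ell * n) = r * n" unfolding r_def
    by (metis real_sqrt_mult real_sqrt_abs abs_of_nat)
  then have "(\<Sum>l=1..J. cell_tolerance n ell l) \<le> 36 * (r * n) + 10 * (ell * 2 ^ J)"
    using sum_cell_tolerance_le[OF ell, of n J] by (simp only: mult.assoc)
  moreover have "ell * 2 ^ J \<le> 2 * (r * n)"
  proof -
    have "ell * 2 ^ J = r * (r * 2 ^ J) * n" using r(2) n
      by (simp add: power2_eq_square field_simps)
    also have "\<dots> \<le> r * 2 * n" using J(2) r(1)
      by (intro mult_right_mono mult_left_mono) (auto simp: r_def)
    finally show ?thesis by simp
  qed
  moreover have "0 \<le> r * n" using r(1) by simp
  moreover have "n / 2 ^ J \<le> r * n"
  proof -
    have "n / 2 ^ J = (1 / 2) ^ J * n" by (simp add: power_divide)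
    then show ?thesis using J(1) by (simp add: mult_right_mono r_def)
  qed
  ultimately show ?thesis unfolding r_def by linarith
qed

lemma exp_neg_cell_level:
  assumes "0 < \<delta>"
  shows "exp (- (ln (1 / \<delta>) + (2 * real l + 1) * ln 2)) = \<delta> / 2 ^ (2 * l + 1)"
proof -
  have "exp ((2 * real l + 1) * ln 2) = exp (ln 2) ^ (2 * l + 1)"
    unfolding exp_of_nat_mult[symmetric] by simp
  then have "exp ((2 * real l + 1) * ln 2) = 2 ^ (2 * l + 1)" by simp
  then show ?thesis using assms by (simp add: exp_diff exp_minus ln_div field_simps)
qed

context real_distribution
begin

lemma dyadic_cells_deviation:
  fixes n :: nat
  assumes atomless: "\<And>x. measure M {x} = 0" and \<delta>: "0 < \<delta>" "\<delta> \<le> 1"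
  defines "S \<equiv> PiM {..<n} (\<lambda>_. M)"
  shows "\<exists>A\<in>sets S. 1 - \<delta> \<le> measure S A \<and> (\<forall>X\<in>A. \<forall>l\<in>{1..J}. \<forall>i<2 ^ l.
    \<bar>sample_count n (dyadic_cell M l i) X - n / 2 ^ l\<bar> < cell_tolerance n (ln (1 / \<delta>)) l)"
proof -
  interpret S: prob_space S unfolding S_def by (intro prob_space_PiM) (simp add: prob_space_axioms)
  define I where "I = Sigma {1..J} (\<lambda>l. {..<(2::nat) ^ l})"
  define bad where "bad = (\<lambda>(l, i). {X \<in> space S.
    cell_tolerance n (ln (1 / \<delta>)) l \<le> \<bar>sample_count n (dyadic_cell M l i) X - n / 2 ^ l\<bar>})"
  have bad_sets: "bad (l, i) \<in> sets S" for l i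
    using measurable_sample_count[of "dyadic_cell M l i" M n] sets_dyadic_cell
    unfolding bad_def prod.case S_def by measurable
  have bad_measure: "measure S (bad (l, i)) \<le> \<delta> / 4 ^ l" if "i < 2 ^ l" for l i
  proof -
    have L: "0 < ln (1 / \<delta>) + (2 * real l + 1) * ln 2"
      using \<delta> by (intro add_nonneg_pos) auto
    have "measure S (bad (l, i)) \<le> 2 * exp (- (ln (1 / \<delta>) + (2 * real l + 1) * ln 2))"
      using sample_count_deviation[OF prob_space_axioms _ L, of "dyadic_cell M l i" n]
        sets_dyadic_cell measure_dyadic_cell[OF atomless that]
      by (simp add: bad_def S_def cell_tolerance_def)
    also have "\<dots> = 2 * (\<delta> / 2 ^ (2 * l + 1))" by (simp only: exp_neg_cell_level[OF \<delta>(1)])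
    also have "\<dots> = \<delta> / 4 ^ l" by (simp add: power_add power_mult)
    finally show ?thesis .
  qed
  have "measure S (\<Union>p\<in>I. bad p) \<le> (\<Sum>p\<in>I. measure S (bad p))"
    using bad_sets by (intro S.finite_measure_subadditive_finite) (auto simp: I_def)
  also have "\<dots> \<le> (\<Sum>l=1..J. \<Sum>i<(2::nat) ^ l. \<delta> / 4 ^ l)"
    unfolding I_def using bad_measure by (subst sum.Sigma) (auto intro!: sum_mono)
  also have "\<dots> \<le> \<delta>" using \<delta> by (intro sum_dyadic_levels_le) simp
  finally have small: "measure S (\<Union>p\<in>I. bad p) \<le> \<delta>" .
  show ?thesis
  proof (intro bexI conjI)
    show "space S - (\<Union>p\<in>I. bad p) \<in> sets S" using bad_sets by (auto simp: I_def)
    then show "1 - \<delta> \<le> measure S (space S - (\<Union>p\<in>I. bad p))"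
      using small bad_sets by (subst S.prob_compl) (auto simp: I_def)
    show "\<forall>X\<in>space S - (\<Union>p\<in>I. bad p). \<forall>l\<in>{1..J}. \<forall>i<2 ^ l.
        \<bar>sample_count n (dyadic_cell M l i) X - n / 2 ^ l\<bar> < cell_tolerance n (ln (1 / \<delta>)) l"
      by (auto simp: I_def bad_def not_le)
  qed
qed

end

definition empirical_cdf :: "nat \<Rightarrow> (nat \<Rightarrow> real) \<Rightarrow> real \<Rightarrow> real" where
  "empirical_cdf n X t = sample_count n {..t} X / n"

lemma empirical_cdf_bounds: "0 \<le> empirical_cdf n X t" "empirical_cdf n X t \<le> 1"
  unfolding empirical_cdf_def
    using sample_count_nonneg[of n "{..t}" X] sample_count_le[of n "{..t}" X]
  by (auto simp: divide_le_eq_1)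

lemma exists_dyadic_scale:
  fixes r :: real
  assumes "0 < r" "r \<le> 1"
  obtains J :: nat where "(1 / 2) ^ J \<le> r" "r * 2 ^ J < 2"
proof -
  obtain J0 where "(1 / 2 :: real) ^ J0 < r"
    using real_arch_pow_inv[OF assms(1), of "1 / 2"] by auto
  then have "(1 / 2 :: real) ^ J0 \<le> r" by simp
  define J where "J = (LEAST J. (1 / 2 :: real) ^ J \<le> r)"
  have J: "(1 / 2 :: real) ^ J \<le> r"
    unfolding J_def using \<open>(1 / 2) ^ J0 \<le> r\<close> by (rule LeastI)
  have "r * 2 ^ J < 2"
  proof (cases J)
    case 0
    then show ?thesis using assms by simp
  next
    case (Suc K)
    have "\<not> (1 / 2 :: real) ^ K \<le> r"
    proof
      assume "(1 / 2 :: real) ^ K \<le> r"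
      then have "J \<le> K" unfolding J_def by (rule Least_le)
      then show False using Suc by simp
    qed
    then have "r * 2 ^ K < 1" by (simp add: field_simps)
    then show ?thesis using Suc by simp
  qed
  with J show ?thesis by (rule that)
qed

lemma (in real_distribution) empirical_cdf_deviation_if_cells:
  fixes n :: nat
  assumes n: "1 \<le> n" and ell: "ln 2 \<le> ell"
    and J: "(1 / 2) ^ J \<le> sqrt (ell / n)" "sqrt (ell / n) * 2 ^ J < 2"
    and cells: "\<And>l i. l \<in> {1..J} \<Longrightarrow> i < 2 ^ l \<Longrightarrow>
      \<bar>sample_count n (dyadic_cell M l i) X - n / 2 ^ l\<bar> \<le> cell_tolerance n ell l"
  shows "\<bar>empirical_cdf n X t - cdf M t\<bar> \<le> 60 * sqrt (ell / n)"
proof -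
  define D where "D = (\<Sum>l=1..J. cell_tolerance n ell l)"
  have "0 < ln (2 :: real)" by simp
  with ell have "0 \<le> ell" by linarith
  then have tol_nonneg: "0 \<le> cell_tolerance n ell l" for l
    unfolding cell_tolerance_def
      by (intro add_nonneg_nonneg mult_nonneg_nonneg real_sqrt_ge_zero) auto
  have "\<bar>sample_count n {..t} X - n * cdf M t\<bar> \<le> n / 2 ^ J + D"
  proof (rule sample_count_atMost_from_grid)
    show "\<bar>sample_count n (cdf_sublevel M (m / 2 ^ J)) X - real n * m / 2 ^ J\<bar> \<le> D"
      if "1 \<le> m" "m \<le> 2 ^ J" for m :: nat
      unfolding D_def using cells tol_nonneg order_refl that
        by (rule sample_count_cdf_sublevel_chain)
    show "0 \<le> D" unfolding D_def using tol_nonneg by (simp add: sum_nonneg)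
  qed
  also have "\<dots> \<le> 60 * sqrt (ell / n) * n" unfolding D_def using dyadic_budget_le[OF n ell J] .
  moreover have "empirical_cdf n X t - cdf M t = (sample_count n {..t} X - n * cdf M t) / n"
    using n by (simp add: empirical_cdf_def field_simps)
  ultimately show ?thesis using n by (simp add: pos_divide_le_eq)
qed

lemma (in real_distribution) empirical_cdf_deviation:
  fixes n :: nat
  assumes atomless: "\<And>x. measure M {x} = 0" and n: "1 \<le> n" and \<delta>: "0 < \<delta>" "\<delta> \<le> 1 / 2"
  defines "S \<equiv> PiM {..<n} (\<lambda>_. M)"
  shows "\<exists>A\<in>sets S. 1 - \<delta> \<le> measure S A \<and>
    (\<forall>X\<in>A. \<forall>t. \<bar>empirical_cdf n X t - cdf M t\<bar> \<le> 60 * sqrt (ln (1 / \<delta>) / n))"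
proof -
  interpret S: prob_space S unfolding S_def by (intro prob_space_PiM) (simp add: prob_space_axioms)
  define ell where "ell = ln (1 / \<delta>)"
  have ell: "ln 2 \<le> ell" unfolding ell_def using \<delta> by (intro ln_mono) (auto simp: field_simps)
  moreover have "0 < ln (2 :: real)" by simp
  ultimately have "0 < ell" by linarith
  then have r: "0 < sqrt (ell / n)" using n by simp
  show ?thesis
  proof (cases "sqrt (ell / n) \<le> 1")
    case False
    have "\<bar>empirical_cdf n X t - cdf M t\<bar> \<le> 60 * sqrt (ell / n)" for X t
      using empirical_cdf_bounds[of n X t] cdf_nonneg[of t] cdf_bounded_prob[of t] False by linarith
    then show ?thesis unfolding ell_def using S.prob_space \<delta> by (intro bexI[of _ "space S"]) auto
  next
    case True
    obtain J where J: "(1 / 2) ^ J \<le> sqrt (ell / n)" "sqrt (ell / n) * 2 ^ J < 2"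
      using exists_dyadic_scale[OF r True] .
    obtain A where A: "A \<in> sets S" "1 - \<delta> \<le> measure S A" and cells: "\<And>X l i. X \<in> A \<Longrightarrow>
        l \<in> {1..J} \<Longrightarrow> i < 2 ^ l \<Longrightarrow>
        \<bar>sample_count n (dyadic_cell M l i) X - n / 2 ^ l\<bar> < cell_tolerance n ell l"
      using dyadic_cells_deviation[OF atomless \<delta>(1), of n J] \<delta> unfolding S_def ell_def by auto
    have "\<bar>empirical_cdf n X t - cdf M t\<bar> \<le> 60 * sqrt (ell / n)" if "X \<in> A" for X t
      using less_imp_le[OF cells[OF that]] by (rule empirical_cdf_deviation_if_cells[OF n ell J])
    then show ?thesis using A unfolding ell_def by blast
  qed
qed

section \<open>The minimum-distance estimator\<close>

definition empirical_kolmogorov_dist :: "nat \<Rightarrow> (nat \<Rightarrow> real) \<Rightarrow> (real \<Rightarrow> real) \<Rightarrow> real" where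
  "empirical_kolmogorov_dist n X g = (SUP t. \<bar>empirical_cdf n X t - cdf (density lborel g) t\<bar>)"

text \<open>The infimum over the class need not be attained, hence the slack \<open>1 / n\<close>.\<close>

definition min_distance_estimate :: "nat \<Rightarrow> real \<Rightarrow> nat \<Rightarrow> (nat \<Rightarrow> real) \<Rightarrow> real \<Rightarrow> real" where
  "min_distance_estimate k \<sigma> n X = (SOME g. g \<in> gauss_mix_class k \<sigma> \<and>
    empirical_kolmogorov_dist n X g \<le>
      (INF h\<in>gauss_mix_class k \<sigma>. empirical_kolmogorov_dist n X h) + 1 / n)"

lemma empirical_kolmogorov_dist_ge:
  assumes "is_density g"
  shows "\<bar>empirical_cdf n X t - cdf (density lborel g) t\<bar> \<le> empirical_kolmogorov_dist n X g"
proof -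
  interpret real_distribution "density lborel g" using real_distribution_density[OF assms] .
  have "\<bar>empirical_cdf n X s - cdf (density lborel g) s\<bar> \<le> 2" for s
    using empirical_cdf_bounds[of n X s] cdf_nonneg[of s] cdf_bounded_prob[of s] by linarith
  then show ?thesis unfolding empirical_kolmogorov_dist_def by (intro cSUP_upper bdd_aboveI2) auto
qed

lemma empirical_kolmogorov_dist_le:
  "(\<And>t. \<bar>empirical_cdf n X t - cdf (density lborel g) t\<bar> \<le> B) \<Longrightarrow>
    empirical_kolmogorov_dist n X g \<le> B"
  unfolding empirical_kolmogorov_dist_def by (rule cSUP_least) auto

lemma min_distance_estimate_near_optimal:
  assumes "0 < \<sigma>" "1 \<le> n" "h \<in> gauss_mix_class k \<sigma>"
  shows "min_distance_estimate k \<sigma> n X \<in> gauss_mix_class k \<sigma>"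
    and "empirical_kolmogorov_dist n X (min_distance_estimate k \<sigma> n X)
      \<le> empirical_kolmogorov_dist n X h + 1 / n"
proof -
  define \<Phi> where "\<Phi> = empirical_kolmogorov_dist n X"
  have nonneg: "0 \<le> \<Phi> g" if "g \<in> gauss_mix_class k \<sigma>" for g
    using empirical_kolmogorov_dist_ge[OF is_density_gauss_mix[OF assms(1) that], of n X 0]
    unfolding \<Phi>_def by linarith
  have "Inf (\<Phi> ` gauss_mix_class k \<sigma>) < Inf (\<Phi> ` gauss_mix_class k \<sigma>) + 1 / n"
    using assms(2) by simp
  then obtain g where g: "g \<in> gauss_mix_class k \<sigma>" "\<Phi> g < Inf (\<Phi> ` gauss_mix_class k \<sigma>) + 1 / n"
    using cInf_lessD[of "\<Phi> ` gauss_mix_class k \<sigma>"] assms(3) by blast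
  then have "\<exists>g. g \<in> gauss_mix_class k \<sigma> \<and> \<Phi> g \<le> (INF h\<in>gauss_mix_class k \<sigma>. \<Phi> h) + 1 / n"
    by (intro exI[of _ g]) auto
  then have est: "min_distance_estimate k \<sigma> n X \<in> gauss_mix_class k \<sigma> \<and>
      \<Phi> (min_distance_estimate k \<sigma> n X) \<le> (INF h\<in>gauss_mix_class k \<sigma>. \<Phi> h) + 1 / n"
    unfolding min_distance_estimate_def \<Phi>_def by (rule someI_ex)
  then show "min_distance_estimate k \<sigma> n X \<in> gauss_mix_class k \<sigma>" ..
  have "(INF h\<in>gauss_mix_class k \<sigma>. \<Phi> h) \<le> \<Phi> h"
    using assms(3) nonneg by (intro cINF_lower bdd_belowI2) auto
  with est show "empirical_kolmogorov_dist n X (min_distance_estimate k \<sigma> n X)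
      \<le> empirical_kolmogorov_dist n X h + 1 / n"
    unfolding \<Phi>_def by simp
qed

lemma is_density_min_distance_estimate:
  assumes "1 \<le> k" "0 < \<sigma>" "1 \<le> n"
  shows "is_density (min_distance_estimate k \<sigma> n X)"
proof -
  have "(\<Sum>i<k. if i = 0 then 1 else 0 :: real) = 1" using assms(1) by simp
  then have "gauss_mix k (\<lambda>i. if i = 0 then 1 else 0) \<mu> \<sigma> \<in> gauss_mix_class k \<sigma>" for \<mu>
    by (intro gauss_mix_in_class) auto
  then show ?thesis
    using is_density_gauss_mix[OF assms(2) min_distance_estimate_near_optimal(1)[OF assms(2,3)]]
      by blast
qed

lemma tv_min_distance_estimate_le:
  assumes \<sigma>: "0 < \<sigma>" and n: "1 \<le> n" and f: "is_density f"
    and g: "g \<in> gauss_mix_class k \<sigma>" "tv f g \<le> \<epsilon>"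
    and fit: "\<And>t. \<bar>empirical_cdf n X t - cdf (density lborel f) t\<bar> \<le> \<eta>"
  shows "tv (min_distance_estimate k \<sigma> n X) f \<le> 2 * real k * (2 * (\<eta> + 2 * \<epsilon>) + 1 / n) + \<epsilon>"
proof -
  define h where "h = min_distance_estimate k \<sigma> n X"
  have h: "h \<in> gauss_mix_class k \<sigma>"
    and h_fit: "empirical_kolmogorov_dist n X h \<le> empirical_kolmogorov_dist n X g + 1 / n"
    unfolding h_def using min_distance_estimate_near_optimal[OF \<sigma> n g(1)] by auto
  have dg: "is_density g" and dh: "is_density h" using is_density_gauss_mix[OF \<sigma>] g h by auto
  have g_fit: "empirical_kolmogorov_dist n X g \<le> \<eta> + 2 * \<epsilon>"
  proof (rule empirical_kolmogorov_dist_le)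
    fix t
    have "\<bar>cdf (density lborel f) t - cdf (density lborel g) t\<bar> \<le> 2 * \<epsilon>"
      using cdf_diff_le_tv[OF f dg, of t] g(2) by linarith
    then show "\<bar>empirical_cdf n X t - cdf (density lborel g) t\<bar> \<le> \<eta> + 2 * \<epsilon>"
      using fit[of t] by linarith
  qed
  have "\<bar>cdf (density lborel h) t - cdf (density lborel g) t\<bar> \<le> 2 * (\<eta> + 2 * \<epsilon>) + 1 / n" for t
    using empirical_kolmogorov_dist_ge[OF dh, of n X t]
      empirical_kolmogorov_dist_ge[OF dg, of n X t]
      h_fit g_fit by (auto simp: abs_le_iff)
  then have "tv h g \<le> 2 * real k * (2 * (\<eta> + 2 * \<epsilon>) + 1 / n)"
    by (rule tv_gauss_mix_le_cdf_dist[OF \<sigma> h g(1)])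
  moreover have "tv h f \<le> tv h g + tv g f"
    using dh dg f by (intro tv_triangle) (auto simp: is_density_def)
  ultimately show ?thesis using g(2) by (simp add: h_def tv_commute)
qed

lemma le_two_mult_sqrt_ln_inverse:
  assumes "0 < \<epsilon>" "\<epsilon> \<le> 1 / 2"
  shows "\<epsilon> \<le> 2 * (\<epsilon> * sqrt (ln (1 / \<epsilon>)))"
proof -
  have "ln 2 \<le> ln (1 / \<epsilon>)" using assms by (intro ln_mono) (auto simp: field_simps)
  then have "1 / 4 \<le> ln (1 / \<epsilon>)" using ln2_ge_two_thirds by linarith
  then have "sqrt (1 / 4) \<le> sqrt (ln (1 / \<epsilon>))" by (rule real_sqrt_le_mono)
  then have "1 \<le> 2 * sqrt (ln (1 / \<epsilon>))" by (simp add: real_sqrt_divide)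
  then show ?thesis using assms mult_left_mono[of 1 "2 * sqrt (ln (1 / \<epsilon>))" \<epsilon>] by simp
qed

lemma inverse_le_two_sqrt_ln_inverse:
  fixes n :: nat
  assumes "1 \<le> n" "0 < \<delta>" "\<delta> \<le> 1 / 2"
  shows "1 / n \<le> 2 * sqrt (ln (1 / \<delta>) / n)"
proof -
  have "ln 2 \<le> ln (1 / \<delta>)" using assms by (intro ln_mono) (auto simp: field_simps)
  then have "1 / 4 \<le> ln (1 / \<delta>)" using ln2_ge_two_thirds by linarith
  have "(1 / n)\<^sup>2 \<le> 1 / n" using assms(1) by (simp add: power2_eq_square field_simps)
  also have "\<dots> \<le> 4 * ln (1 / \<delta>) / n"
    using \<open>1 / 4 \<le> ln (1 / \<delta>)\<close> assms(1) by (intro divide_right_mono) auto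
  also have "\<dots> = (2 * sqrt (ln (1 / \<delta>) / n))\<^sup>2"
    using \<open>1 / 4 \<le> ln (1 / \<delta>)\<close> by (simp add: power_mult_distrib)
  finally show ?thesis by (rule power2_le_imp_le) (use \<open>1 / 4 \<le> ln (1 / \<delta>)\<close> in simp)
qed

lemma min_distance_estimate_rate:
  assumes k: "1 \<le> k" and n: "1 \<le> n" and \<epsilon>: "0 < \<epsilon>" "\<epsilon> \<le> 1 / 2"
    and \<delta>: "0 < \<delta>" "\<delta> \<le> 1 / 2" and \<sigma>: "0 < \<sigma>"
    and f: "is_density f" and g: "g \<in> gauss_mix_class k \<sigma>" "tv f g \<le> \<epsilon>"
  shows "\<exists>A\<in>sets (sample_law n f). 1 - \<delta> \<le> measure (sample_law n f) A \<and>
    (\<forall>X\<in>A. tv (min_distance_estimate k \<sigma> n X) f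
      \<le> 300 * real k * (\<epsilon> * sqrt (ln (1 / \<epsilon>)) + sqrt (ln (1 / \<delta>) / n)))"
proof -
  interpret real_distribution "density lborel f" by (rule real_distribution_density[OF f])
  obtain A where A: "A \<in> sets (sample_law n f)" "1 - \<delta> \<le> measure (sample_law n f) A"
    and fit: "\<And>X t. X \<in> A \<Longrightarrow>
      \<bar>empirical_cdf n X t - cdf (density lborel f) t\<bar> \<le> 60 * sqrt (ln (1 / \<delta>) / n)"
    using empirical_cdf_deviation[OF measure_density_singleton[OF f] n \<delta>]
    unfolding sample_law_def by blast
  define r where "r = sqrt (ln (1 / \<delta>) / n)"
  define e where "e = \<epsilon> * sqrt (ln (1 / \<epsilon>))"
  have "1 / n \<le> 2 * r" unfolding r_def using inverse_le_two_sqrt_ln_inverse[OF n \<delta>] .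
  have "\<epsilon> \<le> 2 * e" unfolding e_def using le_two_mult_sqrt_ln_inverse[OF \<epsilon>] .
  have "0 < 1 / real n" using n by simp
  then have "0 \<le> r" "0 \<le> e" using \<open>1 / n \<le> 2 * r\<close> \<open>\<epsilon> \<le> 2 * e\<close> \<epsilon> by linarith+
  have "2 * real k * (2 * (60 * r + 2 * \<epsilon>) + 1 / n) + \<epsilon> \<le> 2 * real k * (122 * r + 8 * e) + \<epsilon>"
    using \<open>1 / n \<le> 2 * r\<close> \<open>\<epsilon> \<le> 2 * e\<close> by (intro add_right_mono mult_left_mono) auto
  also have "\<dots> \<le> 2 * real k * (122 * r + 8 * e) + 2 * real k * e"
    using \<open>\<epsilon> \<le> 2 * e\<close> mult_right_mono[of 1 "real k" e] k \<open>0 \<le> e\<close> by simp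
  also have "\<dots> = real k * (244 * r + 18 * e)" by (simp add: algebra_simps)
  also have "\<dots> \<le> real k * (300 * (e + r))"
    using \<open>0 \<le> r\<close> \<open>0 \<le> e\<close> by (intro mult_left_mono) auto
  also have "\<dots> = 300 * real k * (e + r)" by simp
  finally have "2 * real k * (2 * (60 * r + 2 * \<epsilon>) + 1 / n) + \<epsilon> \<le> 300 * real k * (e + r)" .
  moreover have
    "tv (min_distance_estimate k \<sigma> n X) f \<le> 2 * real k * (2 * (60 * r + 2 * \<epsilon>) + 1 / n) + \<epsilon>"
    if "X \<in> A" for X
    using fit[OF that] unfolding r_def by (rule tv_min_distance_estimate_le[OF \<sigma> n f g])
  ultimately show ?thesis using A unfolding r_def e_def by force
qed

theorem theorem4:
  fixes k :: nat
  assumes "k \<ge> 1"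
  shows "\<exists>C N. 0 < C \<and>
    (\<forall>n \<ge> N. \<forall>\<epsilon> \<delta> \<sigma> :: real. 0 < \<epsilon> \<and> \<epsilon> \<le> 1/2 \<and> 0 < \<delta> \<and> \<delta> \<le> 1/2 \<and> 0 < \<sigma> \<longrightarrow>
      (\<exists>est :: (nat \<Rightarrow> real) \<Rightarrow> real \<Rightarrow> real.
         (\<forall>X. is_density (est X)) \<and>
         (\<forall>f w \<mu>. is_density f \<and> subgaussian 1 f \<and>
            (\<forall>i<k. 0 \<le> w i) \<and> (\<Sum>i<k. w i) = 1 \<and>
            tv f (gauss_mix k w \<mu> \<sigma>) \<le> \<epsilon> \<longrightarrow>
            (\<exists>A \<in> sets (sample_law n f).
               measure (sample_law n f) A \<ge> 1 - \<delta> \<and>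
               (\<forall>X\<in>A. tv (est X) f \<le>
                  C * (\<epsilon> * sqrt (ln (1/\<epsilon>)) + sqrt (ln (1/\<delta>) / real n)))))))"
  apply (intro exI[of _ "300 * real k"] exI[of _ "1::nat"] conjI allI impI)
  subgoal using assms by simp
  subgoal premises params for n \<epsilon> \<delta> \<sigma>
    apply (intro exI[of _ "min_distance_estimate k \<sigma> n"] conjI allI impI)
    subgoal using assms params by (simp add: is_density_min_distance_estimate)
    subgoal for f w \<mu>
      using assms params
      by (intro min_distance_estimate_rate[where g = "gauss_mix k w \<mu> \<sigma>"])
        (auto intro: gauss_mix_in_class)
    done
  done

end
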